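(* Assume the delay distribution is supported in $\{0,1,\dots,d\}$ for some $d\ge0$, and consider ODAAF run with an arbitrary strictly increasing sequence of positive integers $(n_m)$. For a phase $m$ let $$w_m=\sqrt{\frac{\log(T\tilde\Delta_m^2)}{2n_m}}+\frac{md}{n_m}.$$ Then for any phase $m$ and arm $j$, $$\mathbb{P}\big(j\in\mathcal{A}_m\text{ and }|\bar X_{m,j}-\mu_j|>w_m\big)\le\frac{2}{T\tilde\Delta_m^2}.$$
   Context: Setting (stochastic bandit with delayed, aggregated anonymous feedback): there are $K\ge 2$ arms $\mathcal{A}=\{1,\dots,K\}$. Arm $j$ has a reward distribution $\zeta_j$ supported in $[0,1]$ with mean $\mu_j$. There is a single delay distribution on $\{0,1,2,\dots\}$ common to all arms; $\tau$ denotes a generic random variable with this distribution. The random variables $(R_{l,j},\tau_{l,j})_{l\ge1,j}$ are mutually independent, $R_{l,j}\sim\zeta_j$, $\tau_{l,j}\sim\tau$. If the player chooses arm $J_l$ in round $l$, at the end of round $t$ it observes only $X_t=\sum_{l=1}^t R_{l,J_l}\mathbf{1}\{l+\tau_{l,J_l}=t\}$. The horizon $T$ is known. Algorithm ODAAF with a strictly increasing sequence of positive integers $(n_m)$, $n_0=0$: phases $m=1,2,\dots$ while $t\le T$, tolerance $\tilde\Delta_m=2^{-m}$, $\mathcal{A}_1=\mathcal{A}$, $T_j(0)=\emptyset$. In phase $m$: (1) for each $j\in\mathcal{A}_m$ in a fixed order, set $T_j(m)=T_j(m-1)$ and play $j$ in consecutive rounds, adding each round index to $T_j(m)$, until $|T_j(m)|=n_m$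 (stopping at round $T$); (2) compute $\bar X_{m,j}=|T_j(m)|^{-1}\sum_{t\in T_j(m)}X_t$ and set $\mathcal{A}_{m+1}=\{j\in\mathcal{A}_m:\bar X_{m,j}+\tilde\Delta_m\ge\max_{j'\in\mathcal{A}_m}\bar X_{m,j'}\}$; (3) bridge period: pick an arm of $\mathcal{A}_{m+1}$ and play it for $n_m-n_{m-1}$ consecutive rounds; these rounds are not added to any $T_j(m)$ and their observations are discarded. *)

theory Defs
  imports "HOL-Probability.Probability"
begin

text \<open>Deterministic description of one run of ODAAF, given the realised rewards
  r l j (reward of arm j if played in round l) and delays dl l j.
  Rounds are numbered 1, 2, 3, ...; arms are 1..K.\<close>

record odaaf_state =
  act   :: "nat set"
  start :: nat
  samp  :: "nat \<Rightarrow> nat set"  (* T_j(m): sampling rounds of arm j so far *)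
  play  :: "nat \<Rightarrow> nat"
  xbar  :: "nat \<Rightarrow> real"

definition obs :: "(nat \<Rightarrow> nat \<Rightarrow> real) \<Rightarrow> (nat \<Rightarrow> nat \<Rightarrow> nat) \<Rightarrow> (nat \<Rightarrow> nat) \<Rightarrow> nat \<Rightarrow> real" where
  "obs r dl P t = (\<Sum>l\<in>{1..t}. r l (P l) * (if l + dl l (P l) = t then 1 else 0))"

definition tol :: "nat \<Rightarrow> real" where
  "tol m = (1/2) ^ m"

text \<open>Arms of the active set are played in
  increasing order, each until its sample set has n m elements; then the averages are
  computed, arms are eliminated, and a bridge period of n m - n (m-1) rounds follows,
  playing the arm pick m A_{m+1}.\<close>
definition odaaf_phase ::
  "(nat \<Rightarrow> nat) \<Rightarrow> (nat \<Rightarrow> nat set \<Rightarrow> nat) \<Rightarrow> (nat \<Rightarrow> nat \<Rightarrow> real) \<Rightarrow> (nat \<Rightarrow> nat \<Rightarrow> nat)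
    \<Rightarrow> nat \<Rightarrow> odaaf_state \<Rightarrow> odaaf_state" where
  "odaaf_phase n pick r dl m st = (let
      arms = sorted_list_of_set (act st);
      lens = map (\<lambda>j. n m - card (samp st j)) arms;
      bstart = (\<lambda>i. start st + sum_list (take i lens));
      e = start st + sum_list lens;
      P' = (\<lambda>t. if start st \<le> t \<and> t < e then arms ! (LEAST i. t < bstart (Suc i)) else play st t);
      S' = (\<lambda>j. samp st j \<union> {t. start st \<le> t \<and> t < e \<and> P' t = j});
      Xb = (\<lambda>j. (\<Sum>t\<in>S' j. obs r dl P' t) / real (card (S' j)));
      A' = {j \<in> act st. Xb j + tol m \<ge> Max (Xb ` act st)};
      L = n m - n (m - 1);
      P'' = (\<lambda>t. if e \<le> t \<and> t < e + L then pick m A' else P' t)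
    in \<lparr>act = A', start = e + L, samp = S', play = P'', xbar = Xb\<rparr>)"

text \<open>odaaf_run ... m is the state after phase m (m = 0: initial state).  Hence
  A_m = act (odaaf_run ... (m-1)) and \<bar>X_{m,j} = xbar (odaaf_run ... m) j.\<close>
fun odaaf_run ::
  "nat \<Rightarrow> (nat \<Rightarrow> nat) \<Rightarrow> (nat \<Rightarrow> nat set \<Rightarrow> nat) \<Rightarrow> (nat \<Rightarrow> nat \<Rightarrow> real) \<Rightarrow> (nat \<Rightarrow> nat \<Rightarrow> nat)
    \<Rightarrow> nat \<Rightarrow> odaaf_state" where
  "odaaf_run K n pick r dl 0 =
     \<lparr>act = {1..K}, start = 1, samp = (\<lambda>_. {}), play = (\<lambda>_. 0), xbar = (\<lambda>_. 0)\<rparr>"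
| "odaaf_run K n pick r dl (Suc m) = odaaf_phase n pick r dl (Suc m) (odaaf_run K n pick r dl m)"

end

theory Submission
  imports Defs
begin

text \<open>Write the mean of arm j after phase m as \<mu>_j + (S + B) / n_m, where S is the sum of R_{t,j} - \<mu>_j over the n_m
  sampling rounds of arm j and B is the sum of the observations minus the rewards over those rounds.
  Arm j is sampled in one contiguous block per phase, and the observations of a block differ from
  its rewards only by the rewards delayed past its end and the earlier rewards arriving in it; with
  delays at most d both corrections lie in [0, d], so |B| \<le> m d.

  For S a Chernoff bound holds although the sampling rounds are random: whether j is still active and
  where its block of phase k + 1 starts (at round a, say) are functions of the data before round a,
  hence independent of the rewards of the block.  With Hoeffding's lemma this gives
  E[1{j \<in> A_{k+1}} e^{\<lambda> S_{k+1}}] \<le> e^{\<lambda>^2 (n_{k+1} - n_k) / 8} E[1{j \<in> A_k} e^{\<lambda> S_k}],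
  and Markov's inequality with \<lambda> = \<plusminus>4\<epsilon> bounds each tail by e^{-2 n_m \<epsilon>^2} = 1 / (T 4^{-m}).\<close>

section \<open>The phases of ODAAF\<close>

definition active_list :: "odaaf_state \<Rightarrow> nat list" where
  "active_list st = sorted_list_of_set (act st)"

lemma set_active_list [simp]: "finite (act st) \<Longrightarrow> set (active_list st) = act st"
  by (simp add: active_list_def)

lemma distinct_active_list: "distinct (active_list st)"
  by (simp add: active_list_def)

context
  fixes n :: "nat \<Rightarrow> nat" and m :: nat
begin

definition block_lengths :: "odaaf_state \<Rightarrow> nat list" where
  "block_lengths st = map (\<lambda>j. n m - card (samp st j)) (active_list st)"

definition block_start :: "odaaf_state \<Rightarrow> nat \<Rightarrow> nat" where
  "block_start st i = start st + sum_list (take i (block_lengths st))"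

definition sampling_end :: "odaaf_state \<Rightarrow> nat" where
  "sampling_end st = start st + sum_list (block_lengths st)"

definition sampling_play :: "odaaf_state \<Rightarrow> nat \<Rightarrow> nat" where
  "sampling_play st t = (if start st \<le> t \<and> t < sampling_end st
     then active_list st ! (LEAST i. t < block_start st (Suc i)) else play st t)"

definition new_samples :: "odaaf_state \<Rightarrow> nat \<Rightarrow> nat set" where
  "new_samples st j = samp st j \<union> {t. start st \<le> t \<and> t < sampling_end st \<and> sampling_play st t = j}"

definition phase_means :: "(nat \<Rightarrow> nat \<Rightarrow> real) \<Rightarrow> (nat \<Rightarrow> nat \<Rightarrow> nat) \<Rightarrow> odaaf_state \<Rightarrow> nat \<Rightarrow> real" where
  "phase_means r dl st j =
     (\<Sum>t\<in>new_samples st j. obs r dl (sampling_play st) t) / real (card (new_samples st j))"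

definition survivors :: "(nat \<Rightarrow> nat \<Rightarrow> real) \<Rightarrow> (nat \<Rightarrow> nat \<Rightarrow> nat) \<Rightarrow> odaaf_state \<Rightarrow> nat set" where
  "survivors r dl st = {j \<in> act st. phase_means r dl st j + tol m \<ge> Max (phase_means r dl st ` act st)}"

definition phase_play :: "(nat \<Rightarrow> nat set \<Rightarrow> nat) \<Rightarrow> nat set \<Rightarrow> odaaf_state \<Rightarrow> nat \<Rightarrow> nat" where
  "phase_play pick A st t = (if sampling_end st \<le> t \<and> t < sampling_end st + (n m - n (m - 1))
     then pick m A else sampling_play st t)"

definition arm_block_start :: "odaaf_state \<Rightarrow> nat \<Rightarrow> nat" where
  "arm_block_start st j = block_start st (THE p. p < length (active_list st) \<and> active_list st ! p = j)"

lemma odaaf_phase_eq: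
  "odaaf_phase n pick r dl m st =
     \<lparr>act = survivors r dl st, start = sampling_end st + (n m - n (m - 1)), samp = new_samples st,
      play = phase_play pick (survivors r dl st) st, xbar = phase_means r dl st\<rparr>"
  unfolding odaaf_phase_def Let_def survivors_def phase_means_def new_samples_def sampling_play_def
    sampling_end_def block_start_def block_lengths_def active_list_def phase_play_def
  by simp

lemma block_start_0 [simp]: "block_start st 0 = start st"
  by (simp add: block_start_def)

lemma block_start_mono: "i \<le> i' \<Longrightarrow> block_start st i \<le> block_start st i'"
  by (auto simp: block_start_def le_iff_add take_add)

lemma block_start_Suc:
  "i < length (active_list st) \<Longrightarrow>
     block_start st (Suc i) = block_start st i + (n m - card (samp st (active_list st ! i)))"
  by (simp add: block_start_def take_Suc_conv_app_nth block_lengths_def)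

lemma block_start_length: "block_start st (length (active_list st)) = sampling_end st"
  by (simp add: block_start_def sampling_end_def block_lengths_def)

lemma start_le_sampling_end: "start st \<le> sampling_end st"
  by (simp add: sampling_end_def)

lemma sampling_block_index:
  assumes "start st \<le> t" "t < sampling_end st"
  defines "q \<equiv> LEAST i. t < block_start st (Suc i)"
  shows "q < length (active_list st) \<and> block_start st q \<le> t \<and> t < block_start st (Suc q)"
proof -
  have "length (active_list st) \<noteq> 0"
    using assms(1,2) block_start_length[of st] by (metis block_start_0 leD)
  then have ex: "t < block_start st (Suc (length (active_list st) - 1))"
    using assms(2) block_start_length[of st] by simp
  have "t < block_start st (Suc q)"
    unfolding q_def by (rule LeastI[of "\<lambda>i. t < block_start st (Suc i)", OF ex])
  moreover have "q \<le> length (active_list st) - 1"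
    unfolding q_def by (rule Least_le[of "\<lambda>i. t < block_start st (Suc i)", OF ex])
  moreover have "block_start st q \<le> t"
  proof (cases q)
    case (Suc q')
    then have "\<not> t < block_start st (Suc q')"
      unfolding q_def by (intro not_less_Least) simp
    then show ?thesis using Suc by simp
  qed (use assms(1) in simp)
  ultimately show ?thesis using \<open>length (active_list st) \<noteq> 0\<close> by linarith
qed

lemma sampling_play_in_act:
  assumes "finite (act st)" "start st \<le> t" "t < sampling_end st"
  shows "sampling_play st t \<in> act st"
proof -
  have "(LEAST i. t < block_start st (Suc i)) < length (active_list st)"
    using sampling_block_index[OF assms(2,3)] by blast
  then show ?thesis
    using assms by (metis nth_mem sampling_play_def set_active_list)
qed

lemma sampling_rounds_eq:
  assumes fin: "finite (act st)" and j: "j \<in> act st"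
  shows "{t. start st \<le> t \<and> t < sampling_end st \<and> sampling_play st t = j}
           = {arm_block_start st j ..< arm_block_start st j + (n m - card (samp st j))}"
    and "start st \<le> arm_block_start st j"
    and "arm_block_start st j + (n m - card (samp st j)) \<le> sampling_end st"
proof -
  have dist: "distinct (active_list st)" and set: "set (active_list st) = act st"
    using fin by (simp_all add: distinct_active_list)
  obtain p where p: "p < length (active_list st)" "active_list st ! p = j"
    using j set by (metis in_set_conv_nth)
  have "(THE p. p < length (active_list st) \<and> active_list st ! p = j) = p"
    using p dist by (auto simp: nth_eq_iff_index_eq)
  then have a: "arm_block_start st j = block_start st p"
    by (simp add: arm_block_start_def)
  have b: "block_start st p + (n m - card (samp st j)) = block_start st (Suc p)"
    using block_start_Suc[OF p(1)] p(2) by simp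
  show "start st \<le> arm_block_start st j"
    using a block_start_mono[of 0 p st] by simp
  show "arm_block_start st j + (n m - card (samp st j)) \<le> sampling_end st"
    using a b block_start_mono[of "Suc p" "length (active_list st)" st] p(1) block_start_length
    by simp
  have "{t. start st \<le> t \<and> t < sampling_end st \<and> sampling_play st t = j}
           = {block_start st p ..< block_start st (Suc p)}"
  proof (intro set_eqI iffI)
    fix t assume "t \<in> {t. start st \<le> t \<and> t < sampling_end st \<and> sampling_play st t = j}"
    then have t: "start st \<le> t" "t < sampling_end st" "sampling_play st t = j" by auto
    define q where "q = (LEAST i. t < block_start st (Suc i))"
    have q: "q < length (active_list st)" "block_start st q \<le> t" "t < block_start st (Suc q)"
      using sampling_block_index[OF t(1,2)] unfolding q_def by auto
    have "active_list st ! q = j" using t unfolding sampling_play_def q_def by simp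
    then have "q = p" using p q(1) dist by (metis nth_eq_iff_index_eq)
    then show "t \<in> {block_start st p ..< block_start st (Suc p)}" using q by simp
  next
    fix t assume "t \<in> {block_start st p ..< block_start st (Suc p)}"
    then have t: "block_start st p \<le> t" "t < block_start st (Suc p)" by auto
    have s: "start st \<le> t" using block_start_mono[of 0 p st] t by simp
    have e: "t < sampling_end st"
      using block_start_mono[of "Suc p" "length (active_list st)" st] block_start_length p(1) t
      by simp
    define q where "q = (LEAST i. t < block_start st (Suc i))"
    have q: "q < length (active_list st)" "block_start st q \<le> t" "t < block_start st (Suc q)"
      using sampling_block_index[OF s e] unfolding q_def by auto
    have "q \<le> p" unfolding q_def using t(2) by (rule Least_le)
    moreover have "\<not> q < p"
      using block_start_mono[of "Suc q" p st] q(3) t(1) by (auto simp: Suc_le_eq)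
    ultimately have "q = p" by simp
    then show "t \<in> {t. start st \<le> t \<and> t < sampling_end st \<and> sampling_play st t = j}"
      using s e p(2) unfolding sampling_play_def q_def by simp
  qed
  then show "{t. start st \<le> t \<and> t < sampling_end st \<and> sampling_play st t = j}
           = {arm_block_start st j ..< arm_block_start st j + (n m - card (samp st j))}"
    by (simp only: a b)
qed

end

lemma sampling_play_below: "t < start st \<Longrightarrow> sampling_play n m st t = play st t"
  by (simp add: sampling_play_def)

lemma phase_play_below: "t < sampling_end n m st \<Longrightarrow> phase_play n m pick A st t = sampling_play n m st t"
  by (simp add: phase_play_def)

lemma survivors_subset: "survivors n m r dl st \<subseteq> act st"
  by (auto simp: survivors_def)

lemma survivors_nonempty:
  assumes "finite (act st)" "act st \<noteq> {}"
  shows "survivors n m r dl st \<noteq> {}"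
proof -
  have "Max (phase_means n m r dl st ` act st) \<in> phase_means n m r dl st ` act st"
    using assms by (intro Max_in) auto
  then obtain j where "j \<in> act st" "phase_means n m r dl st j = Max (phase_means n m r dl st ` act st)"
    by auto
  then have "j \<in> survivors n m r dl st"
    by (simp add: survivors_def tol_def)
  then show ?thesis by auto
qed

definition wf_state :: "nat \<Rightarrow> odaaf_state \<Rightarrow> bool" where
  "wf_state K st \<longleftrightarrow> finite (act st) \<and> act st \<noteq> {} \<and> act st \<subseteq> {1..K} \<and> 1 \<le> start st \<and>
     (\<forall>t. 1 \<le> t \<and> t < start st \<longrightarrow> play st t \<in> {1..K}) \<and>
     (\<forall>j t. t \<in> samp st j \<longrightarrow> 1 \<le> t \<and> t < start st \<and> play st t = j) \<and>
     (\<forall>j. finite (samp st j))"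

lemma sampling_play_range:
  assumes "wf_state K st" "1 \<le> l" "l < sampling_end n m st"
  shows "sampling_play n m st l \<in> {1..K}"
proof (cases "start st \<le> l")
  case True
  then show ?thesis
    using sampling_play_in_act[OF _ True assms(3)] assms(1) by (auto simp: wf_state_def)
next
  case False
  then show ?thesis using assms(1,2) by (auto simp: wf_state_def sampling_play_below)
qed

lemma new_samples_split:
  fixes n :: "nat \<Rightarrow> nat" and m :: nat
  assumes wf: "wf_state K st" and j: "j \<in> act st"
  defines "a \<equiv> arm_block_start n m st j" and "L \<equiv> n m - card (samp st j)"
  shows "new_samples n m st j = samp st j \<union> {a..<a + L}"
    and "samp st j \<inter> {a..<a + L} = {}"
    and "start st \<le> a" and "a + L \<le> sampling_end n m st"
proof -
  have fin: "finite (act st)" using wf by (simp add: wf_state_def)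
  show "new_samples n m st j = samp st j \<union> {a..<a + L}"
    unfolding new_samples_def a_def L_def sampling_rounds_eq(1)[OF fin j] ..
  show "start st \<le> a" and "a + L \<le> sampling_end n m st"
    unfolding a_def L_def using sampling_rounds_eq(2,3)[OF fin j] by simp_all
  then show "samp st j \<inter> {a..<a + L} = {}"
    using wf by (force simp: wf_state_def)
qed

lemma card_new_samples:
  assumes "wf_state K st" "j \<in> act st"
  shows "card (new_samples n m st j) = card (samp st j) + (n m - card (samp st j))"
  using new_samples_split[OF assms] assms(1)
  by (simp add: card_Un_disjoint wf_state_def)

lemma new_samples_less_sampling_end:
  "wf_state K st \<Longrightarrow> t \<in> new_samples n m st j \<Longrightarrow> t < sampling_end n m st"
  using start_le_sampling_end[of st n m] by (force simp: wf_state_def new_samples_def)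

lemma wf_state_phase:
  assumes wf: "wf_state K st" and pick: "\<And>m A. A \<noteq> {} \<Longrightarrow> pick m A \<in> A"
  shows "wf_state K (odaaf_phase n pick r dl m st)"
proof -
  let ?A = "survivors n m r dl st" and ?e = "sampling_end n m st"
  have fin: "finite (act st)" and sub: "act st \<subseteq> {1..K}" and start1: "1 \<le> start st"
    and old_play: "\<And>t. 1 \<le> t \<Longrightarrow> t < start st \<Longrightarrow> play st t \<in> {1..K}"
    and old_samp: "\<And>j t. t \<in> samp st j \<Longrightarrow> 1 \<le> t \<and> t < start st \<and> play st t = j"
    and fin_samp: "\<And>j. finite (samp st j)"
    using wf by (auto simp: wf_state_def)
  have A: "?A \<noteq> {}" "?A \<subseteq> act st"
    using survivors_nonempty[where n=n and m=m and r=r and dl=dl and st=st] survivors_subset[where n=n and m=m and r=r and dl=dl and st=st] wf by (auto simp: wf_state_def)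
  have new_play: "phase_play n m pick ?A st t \<in> {1..K}"
    if "1 \<le> t" "t < ?e + (n m - n (m - 1))" for t
  proof (cases "?e \<le> t")
    case True
    have "phase_play n m pick ?A st t = pick m ?A"
      unfolding phase_play_def using True that(2) by (rule if_P[OF conjI])
    moreover have "pick m ?A \<in> act st" using pick[OF A(1)] A(2) by blast
    ultimately show ?thesis using sub by auto
  next
    case False
    then show ?thesis
      using sampling_play_range[OF wf that(1)] by (simp add: phase_play_below)
  qed
  have new_samp: "1 \<le> t \<and> t < ?e + (n m - n (m - 1)) \<and> phase_play n m pick ?A st t = j"
    if "t \<in> new_samples n m st j" for t j
    using that old_samp[of t j] start1 start_le_sampling_end[where n=n and m=m and st=st]
    by (auto simp: new_samples_def phase_play_below sampling_play_below)
  have "finite (new_samples n m st j)" for j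
    using fin_samp[of j] by (auto simp: new_samples_def intro: finite_subset[of _ "{..<?e}"])
  then show ?thesis
    using A fin sub start1 start_le_sampling_end[where n=n and m=m and st=st] new_play new_samp
    by (auto simp: wf_state_def odaaf_phase_eq intro: finite_subset)
qed

lemma wf_state_run:
  assumes "K \<ge> 1" "\<And>m A. A \<noteq> {} \<Longrightarrow> pick m A \<in> A"
  shows "wf_state K (odaaf_run K n pick r dl k)"
proof (induction k)
  case 0
  then show ?case using assms(1) by (simp add: wf_state_def)
next
  case (Suc k)
  then show ?case using wf_state_phase[OF _ assms(2)] by simp
qed

lemma act_run_Suc_subset: "act (odaaf_run K n pick r dl (Suc k)) \<subseteq> act (odaaf_run K n pick r dl k)"
  by (simp add: odaaf_phase_eq survivors_subset)

lemma card_samp_run: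
  assumes "K \<ge> 1" "\<And>m A. A \<noteq> {} \<Longrightarrow> pick m A \<in> A" "n 0 = 0" "mono n"
  shows "j \<in> act (odaaf_run K n pick r dl k) \<Longrightarrow> card (samp (odaaf_run K n pick r dl k) j) = n k"
proof (induction k)
  case (Suc k)
  have j: "j \<in> act (odaaf_run K n pick r dl k)"
    using Suc.prems act_run_Suc_subset by blast
  have "n k \<le> n (Suc k)" using assms(4) by (simp add: monoD)
  then show ?case
    using card_new_samples[OF wf_state_run[OF assms(1,2)] j, where n=n and m="Suc k"] Suc.IH[OF j]
    by (simp add: odaaf_phase_eq)
qed (use assms(3) in simp)

section \<open>The delay bias\<close>

lemma obs_cong_play:
  "(\<And>l. 1 \<le> l \<Longrightarrow> l \<le> t \<Longrightarrow> P l = P' l) \<Longrightarrow> obs r dl P t = obs r dl P' t"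
  unfolding obs_def by (intro sum.cong) auto

lemma obs_cong_data:
  "(\<And>l. 1 \<le> l \<Longrightarrow> l \<le> t \<Longrightarrow> r l (P l) = r' l (P l) \<and> dl l (P l) = dl' l (P l))
     \<Longrightarrow> obs r dl P t = obs r' dl' P t"
  unfolding obs_def by (intro sum.cong) auto

lemma sum_obs_interval:
  "(\<Sum>t\<in>{a..<b}. obs r dl P t) =
     (\<Sum>l\<in>{1..<b}. r l (P l) * (if a \<le> l + dl l (P l) \<and> l + dl l (P l) < b then 1 else 0))"
proof -
  have "(\<Sum>t\<in>{a..<b}. obs r dl P t) =
          (\<Sum>t\<in>{a..<b}. \<Sum>l\<in>{1..<b}. if t = l + dl l (P l) then r l (P l) else 0)"
  proof (intro sum.cong refl)
    fix t assume "t \<in> {a..<b}"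
    then have "obs r dl P t =
        (\<Sum>l\<in>{1..<b}. if l \<le> t then r l (P l) * (if l + dl l (P l) = t then 1 else 0) else 0)"
      unfolding obs_def by (intro sum.mono_neutral_cong_left) auto
    also have "\<dots> = (\<Sum>l\<in>{1..<b}. if t = l + dl l (P l) then r l (P l) else 0)"
      by (intro sum.cong) auto
    finally show "obs r dl P t = \<dots>" .
  qed
  also have "\<dots> = (\<Sum>l\<in>{1..<b}. \<Sum>t\<in>{a..<b}. if t = l + dl l (P l) then r l (P l) else 0)"
    by (rule sum.swap)
  also have "\<dots> = (\<Sum>l\<in>{1..<b}. r l (P l) * (if a \<le> l + dl l (P l) \<and> l + dl l (P l) < b then 1 else 0))"
    by (intro sum.cong refl) (simp add: sum.delta')
  finally show ?thesis .
qed

lemma sum_late_window_le: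
  fixes f :: "nat \<Rightarrow> real"
  assumes "\<And>l. l \<in> {x..<y} \<Longrightarrow> 0 \<le> f l \<and> f l \<le> 1 \<and> (c l \<longrightarrow> y \<le> l + d)"
  shows "0 \<le> (\<Sum>l\<in>{x..<y}. f l * (if c l then 1 else 0))"
    and "(\<Sum>l\<in>{x..<y}. f l * (if c l then 1 else 0)) \<le> d"
proof -
  show "0 \<le> (\<Sum>l\<in>{x..<y}. f l * (if c l then 1 else 0))"
    using assms by (intro sum_nonneg) auto
  have "(\<Sum>l\<in>{x..<y}. f l * (if c l then 1 else 0)) \<le> (\<Sum>l\<in>{x..<y}. if y \<le> l + d then 1 else 0)"
    using assms by (intro sum_mono) auto
  also have "\<dots> = card ({x..<y} \<inter> {l. y \<le> l + d})"
    by (simp add: sum.If_cases)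
  also have "\<dots> \<le> card {y - d..<y}"
    by (intro of_nat_mono card_mono) auto
  also have "\<dots> \<le> d" by simp
  finally show "(\<Sum>l\<in>{x..<y}. f l * (if c l then 1 else 0)) \<le> d" by simp
qed

text \<open>Rewards of a contiguous block [a, b) of plays of arm j can only be observed late (losing at
  most d of them at the end of the block) and the block can only receive rewards of earlier rounds
  at most d rounds before a; both errors lie in [0, d] and have opposite signs.\<close>

lemma observed_block_sum_deviation:
  assumes data: "\<And>l. 1 \<le> l \<Longrightarrow> l < b \<Longrightarrow> 0 \<le> r l (P l) \<and> r l (P l) \<le> 1 \<and> dl l (P l) \<le> d"
    and block: "\<And>l. l \<in> {a..<b} \<Longrightarrow> P l = j" and "1 \<le> a"
  shows "\<bar>(\<Sum>t\<in>{a..<b}. obs r dl P t) - (\<Sum>t\<in>{a..<b}. r t j)\<bar> \<le> d"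
proof (cases "a \<le> b")
  case True
  define f where "f l = r l (P l)" for l
  define g where "g l = (if a \<le> l + dl l (P l) \<and> l + dl l (P l) < b then 1 else (0::real))" for l
  have before: "0 \<le> f l \<and> f l \<le> 1 \<and> (a \<le> l + dl l (P l) \<and> l + dl l (P l) < b \<longrightarrow> a \<le> l + d)"
    if "l \<in> {1..<a}" for l
  proof -
    have "1 \<le> l" "l < b" using that True by auto
    from data[OF this] show ?thesis by (auto simp: f_def)
  qed
  have after: "0 \<le> f l \<and> f l \<le> 1 \<and> (b \<le> l + dl l (P l) \<longrightarrow> b \<le> l + d)" if "l \<in> {a..<b}" for l
  proof -
    have "1 \<le> l" "l < b" using that \<open>1 \<le> a\<close> by auto
    from data[OF this] show ?thesis by (auto simp: f_def)
  qed
  have "{1..<b} = {1..<a} \<union> {a..<b}" using True \<open>1 \<le> a\<close> by auto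
  then have "(\<Sum>t\<in>{a..<b}. obs r dl P t) = (\<Sum>l\<in>{1..<a}. f l * g l) + (\<Sum>l\<in>{a..<b}. f l * g l)"
    unfolding sum_obs_interval f_def g_def by (simp only:) (rule sum.union_disjoint; auto)
  moreover have "(\<Sum>t\<in>{a..<b}. r t j) = (\<Sum>l\<in>{a..<b}. f l)"
    unfolding f_def using block by (intro sum.cong) auto
  moreover have "(\<Sum>l\<in>{a..<b}. f l) - (\<Sum>l\<in>{a..<b}. f l * g l)
                   = (\<Sum>l\<in>{a..<b}. f l * (if b \<le> l + dl l (P l) then 1 else 0))"
    unfolding sum_subtractf[symmetric] g_def by (intro sum.cong) auto
  moreover have "0 \<le> (\<Sum>l\<in>{1..<a}. f l * g l)" "(\<Sum>l\<in>{1..<a}. f l * g l) \<le> d"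
    using sum_late_window_le[OF before] by (simp_all only: g_def)
  moreover note sum_late_window_le[where x=a and y=b, OF after]
  ultimately show ?thesis by linarith
qed simp

definition bounded_data :: "nat \<Rightarrow> nat \<Rightarrow> (nat \<Rightarrow> nat \<Rightarrow> real) \<Rightarrow> (nat \<Rightarrow> nat \<Rightarrow> nat) \<Rightarrow> bool" where
  "bounded_data K d r dl \<longleftrightarrow>
     (\<forall>l i. 1 \<le> l \<longrightarrow> i \<in> {1..K} \<longrightarrow> 0 \<le> r l i \<and> r l i \<le> 1 \<and> dl l i \<le> d)"

definition delay_bias :: "(nat \<Rightarrow> nat \<Rightarrow> real) \<Rightarrow> (nat \<Rightarrow> nat \<Rightarrow> nat) \<Rightarrow> odaaf_state \<Rightarrow> nat \<Rightarrow> real" where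
  "delay_bias r dl st j = (\<Sum>t\<in>samp st j. obs r dl (play st) t - r t j)"

lemma xbar_phase:
  fixes n :: "nat \<Rightarrow> nat" and pick :: "nat \<Rightarrow> nat set \<Rightarrow> nat"
    and r :: "nat \<Rightarrow> nat \<Rightarrow> real" and dl :: "nat \<Rightarrow> nat \<Rightarrow> nat" and m :: nat
  assumes "wf_state K st"
  defines "st' \<equiv> odaaf_phase n pick r dl m st"
  shows "xbar st' j = (\<Sum>t\<in>samp st' j. obs r dl (play st') t) / card (samp st' j)"
proof -
  have "obs r dl (phase_play n m pick (survivors n m r dl st) st) t = obs r dl (sampling_play n m st) t"
    if "t \<in> new_samples n m st j" for t
  proof (rule obs_cong_play)
    fix l assume "l \<le> t"
    moreover have "t < sampling_end n m st"
      using new_samples_less_sampling_end[OF assms(1) that] .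
    ultimately show "phase_play n m pick (survivors n m r dl st) st l = sampling_play n m st l"
      by (simp add: phase_play_below)
  qed
  then show ?thesis
    unfolding st'_def odaaf_phase_eq by (simp add: phase_means_def cong: sum.cong)
qed

lemma delay_bias_phase_le:
  assumes wf: "wf_state K st" and bd: "bounded_data K d r dl" and j: "j \<in> act st"
  shows "\<bar>delay_bias r dl (odaaf_phase n pick r dl m st) j\<bar> \<le> \<bar>delay_bias r dl st j\<bar> + d"
proof -
  define a where "a = arm_block_start n m st j"
  define b where "b = a + (n m - card (samp st j))"
  have new: "new_samples n m st j = samp st j \<union> {a..<b}" and disj: "samp st j \<inter> {a..<b} = {}"
    and "start st \<le> a" and "b \<le> sampling_end n m st"
    using new_samples_split[OF wf j, where n=n and m=m] by (simp_all add: a_def b_def)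
  have old: "\<And>t. t \<in> samp st j \<Longrightarrow> 1 \<le> t \<and> t < start st \<and> play st t = j"
    and fin: "finite (samp st j)"
    using wf by (auto simp: wf_state_def)
  let ?P = "sampling_play n m st" and ?P' = "phase_play n m pick (survivors n m r dl st) st"
  have obs_old: "obs r dl ?P' t = obs r dl (play st) t" if "t \<in> samp st j" for t
    using old[OF that] start_le_sampling_end[where n=n and m=m and st=st]
    by (intro obs_cong_play) (simp add: phase_play_below sampling_play_below)
  have obs_new: "obs r dl ?P' t = obs r dl ?P t" if "t < b" for t
    using that \<open>b \<le> sampling_end n m st\<close> by (intro obs_cong_play) (simp add: phase_play_below)
  have "\<bar>(\<Sum>t\<in>{a..<b}. obs r dl ?P t) - (\<Sum>t\<in>{a..<b}. r t j)\<bar> \<le> d"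
  proof (rule observed_block_sum_deviation)
    show "0 \<le> r l (?P l) \<and> r l (?P l) \<le> 1 \<and> dl l (?P l) \<le> d" if "1 \<le> l" "l < b" for l
    proof -
      have "l < sampling_end n m st" using that \<open>b \<le> sampling_end n m st\<close> by simp
      then have "?P l \<in> {1..K}" using sampling_play_range[OF wf that(1)] by blast
      then show ?thesis using bd that(1) by (simp add: bounded_data_def)
    qed
    show "?P l = j" if "l \<in> {a..<b}" for l
    proof -
      have "finite (act st)" using wf by (simp add: wf_state_def)
      moreover have "l \<in> {arm_block_start n m st j..<arm_block_start n m st j + (n m - card (samp st j))}"
        using that by (simp add: a_def b_def)
      ultimately have "l \<in> {t. start st \<le> t \<and> t < sampling_end n m st \<and> ?P t = j}"
        using sampling_rounds_eq(1)[OF _ j, where n=n and m=m] by blast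
      then show ?thesis by blast
    qed
    show "1 \<le> a" using \<open>start st \<le> a\<close> wf by (simp add: wf_state_def)
  qed
  moreover have "delay_bias r dl (odaaf_phase n pick r dl m st) j
      = (\<Sum>t\<in>samp st j. obs r dl ?P' t - r t j) + (\<Sum>t\<in>{a..<b}. obs r dl ?P' t - r t j)"
    using disj fin by (simp add: delay_bias_def odaaf_phase_eq new sum.union_disjoint)
  moreover have "\<dots> = delay_bias r dl st j + ((\<Sum>t\<in>{a..<b}. obs r dl ?P t) - (\<Sum>t\<in>{a..<b}. r t j))"
    unfolding delay_bias_def sum_subtractf[symmetric] using obs_old obs_new
    by (intro arg_cong2[where f="(+)"] sum.cong) auto
  ultimately show ?thesis by linarith
qed

lemma delay_bias_run_le:
  assumes "K \<ge> 1" "\<And>m A. A \<noteq> {} \<Longrightarrow> pick m A \<in> A" "bounded_data K d r dl"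
  shows "j \<in> act (odaaf_run K n pick r dl k) \<Longrightarrow> \<bar>delay_bias r dl (odaaf_run K n pick r dl k) j\<bar> \<le> k * d"
proof (induction k)
  case (Suc k)
  have j: "j \<in> act (odaaf_run K n pick r dl k)"
    using Suc.prems act_run_Suc_subset by blast
  show ?case
    using delay_bias_phase_le[OF wf_state_run[OF assms(1,2)] assms(3) j, where n=n and m="Suc k" and pick=pick] Suc.IH[OF j]
    by (simp add: algebra_simps)
qed (simp add: delay_bias_def)

lemma xbar_run_deviation_le:
  assumes K: "K \<ge> 1" and pick: "\<And>m A. A \<noteq> {} \<Longrightarrow> pick m A \<in> A" and bd: "bounded_data K d r dl"
    and "n 0 = 0" "mono n" "0 < n (Suc k)" and j: "j \<in> act (odaaf_run K n pick r dl k)"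
  defines "st \<equiv> odaaf_run K n pick r dl (Suc k)"
  shows "\<bar>xbar st j - c\<bar> \<le> \<bar>\<Sum>t\<in>samp st j. r t j - c\<bar> / n (Suc k) + Suc k * d / n (Suc k)"
proof -
  have wf: "wf_state K (odaaf_run K n pick r dl k)" by (rule wf_state_run[OF K pick])
  have "card (samp st j) = card (samp (odaaf_run K n pick r dl k) j) + (n (Suc k) - n k)"
    using card_new_samples[OF wf j, where n=n and m="Suc k"] card_samp_run[OF K pick assms(4,5) j]
    by (simp add: st_def odaaf_phase_eq)
  then have card: "card (samp st j) = n (Suc k)"
    using card_samp_run[OF K pick assms(4,5) j] monoD[OF assms(5), of k "Suc k"] by simp
  have bias: "\<bar>delay_bias r dl st j\<bar> \<le> Suc k * d"
    using delay_bias_phase_le[OF wf bd j, where n=n and m="Suc k" and pick=pick] delay_bias_run_le[OF K pick bd j]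
    by (simp add: st_def algebra_simps)
  have "xbar st j - c = (delay_bias r dl st j + (\<Sum>t\<in>samp st j. r t j - c)) / n (Suc k)"
    using xbar_phase[OF wf, where n=n and pick=pick and r=r and dl=dl and m="Suc k" and j=j] card \<open>0 < n (Suc k)\<close>
    by (simp add: st_def delay_bias_def sum_subtractf field_simps)
  then have "\<bar>xbar st j - c\<bar> \<le> (\<bar>delay_bias r dl st j\<bar> + \<bar>\<Sum>t\<in>samp st j. r t j - c\<bar>) / n (Suc k)"
    using \<open>0 < n (Suc k)\<close> by (simp add: abs_triangle_ineq divide_right_mono)
  also have "\<dots> \<le> (Suc k * d + \<bar>\<Sum>t\<in>samp st j. r t j - c\<bar>) / n (Suc k)"
    using bias by (intro divide_right_mono) auto
  also have "\<dots> = \<bar>\<Sum>t\<in>samp st j. r t j - c\<bar> / n (Suc k) + Suc k * d / n (Suc k)"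
    by (simp only: add_divide_distrib add.commute)
  finally show ?thesis .
qed

section \<open>Measurability of the run\<close>

definition same_data_before ::
  "nat \<Rightarrow> nat \<Rightarrow> (nat \<Rightarrow> nat \<Rightarrow> real) \<Rightarrow> (nat \<Rightarrow> nat \<Rightarrow> nat) \<Rightarrow> (nat \<Rightarrow> nat \<Rightarrow> real) \<Rightarrow> (nat \<Rightarrow> nat \<Rightarrow> nat) \<Rightarrow> bool"
where
  "same_data_before K s r dl r' dl' \<longleftrightarrow>
     (\<forall>l i. 1 \<le> l \<longrightarrow> l < s \<longrightarrow> i \<in> {1..K} \<longrightarrow> r l i = r' l i \<and> dl l i = dl' l i)"

lemma same_data_before_mono:
  "same_data_before K s r dl r' dl' \<Longrightarrow> s' \<le> s \<Longrightarrow> same_data_before K s' r dl r' dl'"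
  by (auto simp: same_data_before_def)

lemma same_data_before_sym:
  "same_data_before K s r dl r' dl' \<Longrightarrow> same_data_before K s r' dl' r dl"
  by (auto simp: same_data_before_def)

lemma odaaf_phase_cong_data:
  assumes wf: "wf_state K st" and same: "same_data_before K (sampling_end n m st) r dl r' dl'"
  shows "odaaf_phase n pick r' dl' m st = odaaf_phase n pick r dl m st"
proof -
  have "obs r dl (sampling_play n m st) t = obs r' dl' (sampling_play n m st) t"
    if "t \<in> new_samples n m st j" for t j
  proof (rule obs_cong_data)
    fix l assume l: "1 \<le> l" "l \<le> t"
    then have "l < sampling_end n m st"
      using new_samples_less_sampling_end[OF wf that] by simp
    then show "r l (sampling_play n m st l) = r' l (sampling_play n m st l) \<and>
               dl l (sampling_play n m st l) = dl' l (sampling_play n m st l)"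
      using sampling_play_range[OF wf l(1)] same l(1) by (simp add: same_data_before_def)
  qed
  then have "phase_means n m r dl st = phase_means n m r' dl' st"
    by (auto simp: phase_means_def cong: sum.cong)
  then show ?thesis by (simp add: odaaf_phase_eq survivors_def)
qed

lemma odaaf_run_cong_data:
  assumes K: "K \<ge> 1" and pick: "\<And>m A. A \<noteq> {} \<Longrightarrow> pick m A \<in> A"
  shows "same_data_before K (start (odaaf_run K n pick r dl k)) r dl r' dl' \<Longrightarrow>
         odaaf_run K n pick r' dl' k = odaaf_run K n pick r dl k"
proof (induction k)
  case (Suc k)
  let ?st = "odaaf_run K n pick r dl k"
  have same: "same_data_before K (sampling_end n (Suc k) ?st) r dl r' dl'"
    using Suc.prems by (rule same_data_before_mono) (simp add: odaaf_phase_eq)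
  then have "odaaf_run K n pick r' dl' k = ?st"
    using start_le_sampling_end by (intro Suc.IH same_data_before_mono[OF same])
  then show ?case
    using odaaf_phase_cong_data[OF wf_state_run[OF K pick] same] by simp
qed simp

lemma measurable_piecewise_countable:
  assumes V: "countable V" "\<And>x. x \<in> space N \<Longrightarrow> D x \<in> V"
    and pre: "\<And>v. v \<in> V \<Longrightarrow> {x \<in> space N. D x = v} \<in> sets N"
    and g: "\<And>v. v \<in> V \<Longrightarrow> g v \<in> measurable N M"
  shows "(\<lambda>x. g (D x) x) \<in> measurable N M"
proof (rule measurableI)
  fix x assume x: "x \<in> space N"
  show "g (D x) x \<in> space M"
    using measurable_space[OF g[OF V(2)[OF x]] x] .
next
  fix A assume A: "A \<in> sets M"
  have "(\<lambda>x. g (D x) x) -` A \<inter> space N = (\<Union>v\<in>V. {x \<in> space N. D x = v} \<inter> (g v -` A \<inter> space N))"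
    using V(2) by blast
  also have "\<dots> \<in> sets N"
  proof (rule sets.countable_UN''[OF V(1)])
    fix v assume "v \<in> V"
    then show "{x \<in> space N. D x = v} \<inter> (g v -` A \<inter> space N) \<in> sets N"
      using pre measurable_sets[OF g A] by blast
  qed
  finally show "(\<lambda>x. g (D x) x) -` A \<inter> space N \<in> sets N" .
qed

text \<open>Without its means the state after phase k takes only countably many values as the data
  vary, each on a measurable set; this is what makes functions of the run measurable.\<close>

definition erase_means :: "odaaf_state \<Rightarrow> odaaf_state" where
  "erase_means st = st\<lparr>xbar := (\<lambda>_. 0)\<rparr>"

lemma erase_means_simps [simp]:
  "act (erase_means st) = act st" "start (erase_means st) = start st" "samp (erase_means st) = samp st"
  "play (erase_means st) = play st" "xbar (erase_means st) = (\<lambda>_. 0)"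
  by (simp_all add: erase_means_def)

lemma wf_state_erase_means [simp]: "wf_state K (erase_means st) = wf_state K st"
  by (simp add: wf_state_def)

lemma odaaf_phase_erase_means: "odaaf_phase n pick r dl m (erase_means st) = odaaf_phase n pick r dl m st"
  unfolding odaaf_phase_def erase_means_def Let_def by (simp cong: if_cong)

definition phase_outcome :: "(nat \<Rightarrow> nat) \<Rightarrow> (nat \<Rightarrow> nat set \<Rightarrow> nat) \<Rightarrow> nat \<Rightarrow> odaaf_state \<Rightarrow> nat set \<Rightarrow> odaaf_state" where
  "phase_outcome n pick m st A = \<lparr>act = A, start = sampling_end n m st + (n m - n (m - 1)),
     samp = new_samples n m st, play = phase_play n m pick A st, xbar = (\<lambda>_. 0)\<rparr>"

lemma erase_means_phase:
  "erase_means (odaaf_phase n pick r dl m st) = phase_outcome n pick m st (survivors n m r dl st)"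
  by (simp add: odaaf_phase_eq phase_outcome_def erase_means_def)

locale measurable_data =
  fixes N :: "'b measure" and K :: nat and n :: "nat \<Rightarrow> nat" and pick :: "nat \<Rightarrow> nat set \<Rightarrow> nat"
    and r :: "nat \<Rightarrow> nat \<Rightarrow> 'b \<Rightarrow> real" and dl :: "nat \<Rightarrow> nat \<Rightarrow> 'b \<Rightarrow> nat"
  assumes measurable_r [measurable]: "\<And>l i. r l i \<in> borel_measurable N"
    and measurable_dl [measurable]: "\<And>l i. dl l i \<in> measurable N (count_space UNIV)"
    and K_ge_1: "K \<ge> 1" and pick_in: "\<And>m A. A \<noteq> {} \<Longrightarrow> pick m A \<in> A"
begin

abbreviation run :: "nat \<Rightarrow> 'b \<Rightarrow> odaaf_state" where
  "run k x \<equiv> odaaf_run K n pick (\<lambda>l i. r l i x) (\<lambda>l i. dl l i x) k"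

lemma obs_measurable: "(\<lambda>x. obs (\<lambda>l i. r l i x) (\<lambda>l i. dl l i x) P t) \<in> borel_measurable N"
  unfolding obs_def by measurable

lemma phase_means_measurable [measurable]:
  "(\<lambda>x. phase_means n m (\<lambda>l i. r l i x) (\<lambda>l i. dl l i x) st j) \<in> borel_measurable N"
  unfolding phase_means_def by (intro borel_measurable_divide borel_measurable_sum obs_measurable) simp

lemma survivors_preimage_sets:
  assumes "finite (act st)"
  shows "{x \<in> space N. survivors n m (\<lambda>l i. r l i x) (\<lambda>l i. dl l i x) st = A} \<in> sets N"
proof -
  have "{x \<in> space N. survivors n m (\<lambda>l i. r l i x) (\<lambda>l i. dl l i x) st = A} =
        {x \<in> space N. A \<subseteq> act st \<and> (\<forall>j\<in>act st. j \<in> A \<longleftrightarrow>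
           Max ((\<lambda>i. phase_means n m (\<lambda>l i. r l i x) (\<lambda>l i. dl l i x) st i) ` act st)
             \<le> phase_means n m (\<lambda>l i. r l i x) (\<lambda>l i. dl l i x) st j + tol m)}"
    unfolding survivors_def by (intro Collect_cong conj_cong refl) (auto simp: image_def)
  also have "\<dots> \<in> sets N" using assms by measurable
  finally show ?thesis .
qed

definition reachable_states :: "nat \<Rightarrow> odaaf_state set" where
  "reachable_states k = (\<lambda>x. erase_means (run k x)) ` space N"

lemma run_Suc_erase_means:
  "run (Suc k) x = odaaf_phase n pick (\<lambda>l i. r l i x) (\<lambda>l i. dl l i x) (Suc k) (erase_means (run k x))"
  by (simp add: odaaf_phase_erase_means)

lemma erase_means_run_Suc:
  "erase_means (run (Suc k) x) = phase_outcome n pick (Suc k) (erase_means (run k x))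
     (survivors n (Suc k) (\<lambda>l i. r l i x) (\<lambda>l i. dl l i x) (erase_means (run k x)))"
  unfolding run_Suc_erase_means by (rule erase_means_phase)

lemma wf_state_reachable: "v \<in> reachable_states k \<Longrightarrow> wf_state K v"
  using wf_state_run[OF K_ge_1 pick_in] by (auto simp: reachable_states_def)

lemma countable_reachable_states: "countable (reachable_states k)"
proof (induction k)
  case 0
  have "reachable_states 0 \<subseteq> {erase_means (run 0 undefined)}"
    by (auto simp: reachable_states_def)
  then show ?case by (rule countable_subset) simp
next
  case (Suc k)
  have "reachable_states (Suc k) \<subseteq>
          (\<lambda>(v, A). phase_outcome n pick (Suc k) v A) ` (SIGMA v:reachable_states k. Pow (act v))"
    using survivors_subset unfolding reachable_states_def erase_means_run_Suc by fastforce
  moreover have "countable (SIGMA v:reachable_states k. Pow (act v))"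
  proof (rule countable_SIGMA[OF Suc.IH])
    fix v assume "v \<in> reachable_states k"
    then show "countable (Pow (act v))"
      using wf_state_reachable by (simp add: countable_finite wf_state_def)
  qed
  ultimately show ?case by (blast intro: countable_subset countable_image)
qed

lemma erase_means_run_preimage_sets: "{x \<in> space N. erase_means (run k x) = w} \<in> sets N"
proof (induction k arbitrary: w)
  case 0
  have "{x \<in> space N. erase_means (run 0 x) = w} = (if erase_means (run 0 undefined) = w then space N else {})"
    by auto
  then show ?case by simp
next
  case (Suc k)
  let ?A = "\<lambda>x v. survivors n (Suc k) (\<lambda>l i. r l i x) (\<lambda>l i. dl l i x) v"
  have "{x \<in> space N. erase_means (run (Suc k) x) = w} =
        (\<Union>v\<in>reachable_states k. \<Union>A\<in>Pow (act v). if phase_outcome n pick (Suc k) v A = w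
           then {x \<in> space N. erase_means (run k x) = v} \<inter> {x \<in> space N. ?A x v = A} else {})"
  proof (intro set_eqI iffI)
    fix x assume x: "x \<in> {x \<in> space N. erase_means (run (Suc k) x) = w}"
    let ?v = "erase_means (run k x)"
    have v: "?v \<in> reachable_states k" using x by (auto simp: reachable_states_def)
    have A: "?A x ?v \<in> Pow (act ?v)" using survivors_subset by blast
    have "phase_outcome n pick (Suc k) ?v (?A x ?v) = w"
      using x erase_means_run_Suc[where k=k and x=x] by simp
    then show "x \<in> (\<Union>v\<in>reachable_states k. \<Union>A\<in>Pow (act v). if phase_outcome n pick (Suc k) v A = w
           then {x \<in> space N. erase_means (run k x) = v} \<inter> {x \<in> space N. ?A x v = A} else {})"
      using x by (intro UN_I[OF v] UN_I[OF A]) simp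
  next
    fix x assume "x \<in> (\<Union>v\<in>reachable_states k. \<Union>A\<in>Pow (act v). if phase_outcome n pick (Suc k) v A = w
           then {x \<in> space N. erase_means (run k x) = v} \<inter> {x \<in> space N. ?A x v = A} else {})"
    then obtain v A where "phase_outcome n pick (Suc k) v A = w" "x \<in> space N"
        "erase_means (run k x) = v" "?A x v = A"
      by (auto split: if_splits)
    then show "x \<in> {x \<in> space N. erase_means (run (Suc k) x) = w}"
      using erase_means_run_Suc[where k=k and x=x] by simp
  qed
  also have "\<dots> \<in> sets N"
    using countable_reachable_states wf_state_reachable
    by (intro sets.countable_UN'' sets.finite_UN)
       (auto simp: wf_state_def Suc.IH survivors_preimage_sets)
  finally show ?case .
qed

lemma measurable_erased_run_dependent:
  assumes "\<And>v. g v \<in> measurable N M"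
  shows "(\<lambda>x. g (erase_means (run k x)) x) \<in> measurable N M"
proof (rule measurable_piecewise_countable[where V="reachable_states k"])
  show "countable (reachable_states k)" by (rule countable_reachable_states)
  show "erase_means (run k x) \<in> reachable_states k" if "x \<in> space N" for x
    using that by (simp add: reachable_states_def)
  show "{x \<in> space N. erase_means (run k x) = v} \<in> sets N" for v
    by (rule erase_means_run_preimage_sets)
qed (rule assms)

lemma sets_erased_run_dependent:
  assumes "\<And>v. {x \<in> space N. P v x} \<in> sets N"
  shows "{x \<in> space N. P (erase_means (run k x)) x} \<in> sets N"
proof -
  have "(\<lambda>x. P (erase_means (run k x)) x) \<in> measurable N (count_space UNIV)"
    by (rule measurable_erased_run_dependent) (use assms in \<open>simp add: Measurable.pred_def\<close>)
  then show ?thesis unfolding Measurable.pred_def .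
qed

end

section \<open>A Chernoff bound for the sampled rewards\<close>

lemma (in prob_space) indep_var_nn_integral_mult:
  fixes f g :: "_ \<Rightarrow> ennreal"
  assumes "indep_var S X T Y" "f \<in> borel_measurable S" "g \<in> borel_measurable T"
  shows "(\<integral>\<^sup>+\<omega>. f (X \<omega>) * g (Y \<omega>) \<partial>M) = (\<integral>\<^sup>+\<omega>. f (X \<omega>) \<partial>M) * (\<integral>\<^sup>+\<omega>. g (Y \<omega>) \<partial>M)"
proof -
  have "indep_var borel (f \<circ> X) borel (g \<circ> Y)"
    using assms by (rule indep_var_compose)
  moreover have "case_bool borel borel = (\<lambda>_. borel :: ennreal measure)"
    by (simp add: fun_eq_iff split: bool.split)
  ultimately have "indep_vars (\<lambda>_. borel) (case_bool (f \<circ> X) (g \<circ> Y)) UNIV"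
    by (simp add: indep_var_def)
  from indep_vars_nn_integral[OF _ this] show ?thesis
    by (simp add: UNIV_bool mult.commute comp_def)
qed

lemma nn_integral_exp_centred_le:
  fixes f :: "'a \<Rightarrow> real"
  assumes "prob_space M" "f \<in> borel_measurable M" "AE x in M. f x \<in> {0..1}" "(\<integral>x. f x \<partial>M) = \<mu>"
  shows "(\<integral>\<^sup>+x. ennreal (exp (l * (f x - \<mu>))) \<partial>M) \<le> ennreal (exp (l\<^sup>2 / 8))"
proof -
  interpret prob_space M by (rule assms(1))
  consider "l > 0" | "l < 0" | "l = 0" by linarith
  then show ?thesis
  proof cases
    case 1
    interpret interval_bounded_random_variable M f 0 1
      by unfold_locales (use assms in auto)
    show ?thesis using Hoeffdings_lemma_nn_integral[OF 1] assms(4) by simp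
  next
    case 2
    interpret interval_bounded_random_variable M "\<lambda>x. - f x" "-1" 0
      by unfold_locales (use assms in \<open>auto elim!: eventually_mono\<close>)
    have "- l > 0" using 2 by simp
    from Hoeffdings_lemma_nn_integral[OF this] show ?thesis
      using assms(4) by (simp add: algebra_simps)
  qed (simp add: emeasure_space_1)
qed

locale odaaf_bandit = prob_space M for M :: "'a measure" +
  fixes K :: nat and n :: "nat \<Rightarrow> nat" and pick :: "nat \<Rightarrow> nat set \<Rightarrow> nat"
    and R :: "nat \<Rightarrow> nat \<Rightarrow> 'a \<Rightarrow> real" and tau :: "nat \<Rightarrow> nat \<Rightarrow> 'a \<Rightarrow> nat"
    and zeta :: "nat \<Rightarrow> real measure" and mu :: "nat \<Rightarrow> real" and D :: "nat measure"
    and d :: nat and j :: nat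
  assumes K_ge_1: "K \<ge> 1" and n_0: "n 0 = 0" and strict_mono_n: "strict_mono n"
    and pick_in: "\<And>m A. A \<noteq> {} \<Longrightarrow> pick m A \<in> A"
    and measurable_R [measurable]: "\<And>l j. R l j \<in> borel_measurable M"
    and measurable_tau [measurable]: "\<And>l j. tau l j \<in> measurable M (count_space UNIV)"
    and indep: "indep_vars (\<lambda>_. borel) (\<lambda>(l, j, b) \<omega>. if b then R l j \<omega> else real (tau l j \<omega>))
                  ({1..} \<times> {1..K} \<times> UNIV)"
    and distr_R: "\<And>l j. l \<ge> 1 \<Longrightarrow> j \<in> {1..K} \<Longrightarrow> distr M borel (R l j) = zeta j"
    and zeta_unit: "\<And>j. j \<in> {1..K} \<Longrightarrow> (AE x in zeta j. 0 \<le> x \<and> x \<le> 1)"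
    and mu_eq: "\<And>j. j \<in> {1..K} \<Longrightarrow> mu j = (\<integral>x. x \<partial>zeta j)"
    and distr_tau: "\<And>l j. l \<ge> 1 \<Longrightarrow> j \<in> {1..K} \<Longrightarrow> distr M (count_space UNIV) (tau l j) = D"
    and D_le: "AE x in D. x \<le> d"
    and j_arm: "j \<in> {1..K}"
begin

sublocale measurable_data M K n pick R tau
proof
  show "\<And>l i. R l i \<in> borel_measurable M" by (rule measurable_R)
  show "\<And>l i. tau l i \<in> measurable M (count_space UNIV)" by (rule measurable_tau)
qed (fact K_ge_1 pick_in)+

lemma mono_n: "mono n"
  using strict_mono_n by (rule strict_mono_mono)

lemma n_pos: "0 < n (Suc k)"
  using strict_monoD[OF strict_mono_n, of 0 "Suc k"] n_0 by simp

lemma bounded_data_AE: "AE \<omega> in M. bounded_data K d (\<lambda>l i. R l i \<omega>) (\<lambda>l i. tau l i \<omega>)"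
proof -
  have "AE \<omega> in M. 0 \<le> R l i \<omega> \<and> R l i \<omega> \<le> 1 \<and> tau l i \<omega> \<le> d" if "1 \<le> l" "i \<in> {1..K}" for l i
  proof -
    have "AE x in distr M borel (R l i). 0 \<le> x \<and> x \<le> 1"
      by (subst distr_R[OF that]) (rule zeta_unit[OF that(2)])
    then have "AE \<omega> in M. 0 \<le> R l i \<omega> \<and> R l i \<omega> \<le> 1"
      by (subst (asm) AE_distr_iff) auto
    moreover have "AE x in distr M (count_space UNIV) (tau l i). x \<le> d"
      by (subst distr_tau[OF that]) (rule D_le)
    then have "AE \<omega> in M. tau l i \<omega> \<le> d"
      by (subst (asm) AE_distr_iff) auto
    ultimately show ?thesis by eventually_elim auto
  qed
  then have "AE \<omega> in M. \<forall>l i. 1 \<le> l \<longrightarrow> i \<in> {1..K} \<longrightarrow> 0 \<le> R l i \<omega> \<and> R l i \<omega> \<le> 1 \<and> tau l i \<omega> \<le> d"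
    by (auto simp: AE_all_countable)
  then show ?thesis by (simp add: bounded_data_def)
qed

lemma reward_mgf_le:
  assumes "1 \<le> l"
  shows "(\<integral>\<^sup>+\<omega>. ennreal (exp (lam * (R l j \<omega> - mu j))) \<partial>M) \<le> ennreal (exp (lam\<^sup>2 / 8))"
proof (rule nn_integral_exp_centred_le)
  have "AE x in distr M borel (R l j). 0 \<le> x \<and> x \<le> 1"
    by (subst distr_R[OF assms j_arm]) (rule zeta_unit[OF j_arm])
  then show "AE x in M. R l j x \<in> {0..1}"
    by (subst (asm) AE_distr_iff) auto
  have "(\<integral>x. R l j x \<partial>M) = (\<integral>x. x \<partial>distr M borel (R l j))"
    by (simp add: integral_distr)
  then show "(\<integral>x. R l j x \<partial>M) = mu j"
    using distr_R[OF assms j_arm] mu_eq[OF j_arm] by simp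
qed (simp_all add: prob_space_axioms)

definition data_var :: "nat \<times> nat \<times> bool \<Rightarrow> 'a \<Rightarrow> real" where
  "data_var = (\<lambda>(l, j, b) \<omega>. if b then R l j \<omega> else real (tau l j \<omega>))"

lemma data_var_measurable [measurable]: "data_var i \<in> borel_measurable M"
  by (cases i) (auto simp: data_var_def)

definition past_index :: "nat \<Rightarrow> (nat \<times> nat \<times> bool) set" where
  "past_index a = {1..<a} \<times> {1..K} \<times> UNIV"

definition block_index :: "nat \<Rightarrow> nat \<Rightarrow> (nat \<times> nat \<times> bool) set" where
  "block_index a L = {a..<a + L} \<times> {j} \<times> {True}"

lemma block_index_eq_image: "block_index a L = (\<lambda>l. (l, j, True)) ` {a..<a + L}"
  by (auto simp: block_index_def)

lemma indep_past_block:
  assumes "1 \<le> a"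
  shows "indep_var (PiM (past_index a) (\<lambda>_. borel)) (\<lambda>\<omega>. restrict (\<lambda>i. data_var i \<omega>) (past_index a))
                   (PiM (block_index a L) (\<lambda>_. borel)) (\<lambda>\<omega>. restrict (\<lambda>i. data_var i \<omega>) (block_index a L))"
  using assms j_arm
  by (intro indep_var_restrict[OF indep[folded data_var_def]])
     (auto simp: past_index_def block_index_def)

definition block_mgf_var :: "real \<Rightarrow> nat \<Rightarrow> nat \<Rightarrow> 'a \<Rightarrow> ennreal" where
  "block_mgf_var lam a L \<omega> = ennreal (exp (lam * (\<Sum>l\<in>{a..<a + L}. R l j \<omega> - mu j)))"

lemma block_mgf_var_eq_prod:
  "block_mgf_var lam a L \<omega> = (\<Prod>i\<in>block_index a L. ennreal (exp (lam * (data_var i \<omega> - mu j))))"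
proof -
  have "inj_on (\<lambda>l. (l, j, True)) {a..<a + L}" by (auto simp: inj_on_def)
  then have "(\<Prod>i\<in>block_index a L. ennreal (exp (lam * (data_var i \<omega> - mu j))))
      = (\<Prod>l\<in>{a..<a + L}. ennreal (exp (lam * (R l j \<omega> - mu j))))"
    by (simp add: block_index_eq_image prod.reindex data_var_def)
  also have "\<dots> = ennreal (exp (lam * (\<Sum>l\<in>{a..<a + L}. R l j \<omega> - mu j)))"
    by (simp add: prod_ennreal exp_sum sum_distrib_left)
  finally show ?thesis by (simp add: block_mgf_var_def)
qed

lemma block_mgf_le:
  assumes "1 \<le> a"
  shows "(\<integral>\<^sup>+\<omega>. block_mgf_var lam a L \<omega> \<partial>M) \<le> ennreal (exp (lam\<^sup>2 / 8)) ^ L"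
proof -
  have "indep_vars (\<lambda>_. borel) (\<lambda>i \<omega>. ennreal (exp (lam * (data_var i \<omega> - mu j)))) (block_index a L)"
    using assms j_arm
    by (intro indep_vars_compose2[OF indep_vars_subset[OF indep[folded data_var_def]]])
       (auto simp: block_index_def)
  then have "(\<integral>\<^sup>+\<omega>. block_mgf_var lam a L \<omega> \<partial>M)
        = (\<Prod>i\<in>block_index a L. \<integral>\<^sup>+\<omega>. ennreal (exp (lam * (data_var i \<omega> - mu j))) \<partial>M)"
    unfolding block_mgf_var_eq_prod by (intro indep_vars_nn_integral) (auto simp: block_index_def)
  also have "\<dots> \<le> (\<Prod>i\<in>block_index a L. ennreal (exp (lam\<^sup>2 / 8)))"
    using assms reward_mgf_le
    by (intro prod_mono_ennreal) (auto simp: block_index_def data_var_def)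
  also have "\<dots> = ennreal (exp (lam\<^sup>2 / 8)) ^ L"
    by (simp add: block_index_eq_image card_image inj_on_def)
  finally show ?thesis .
qed

text \<open>The rewards and delays of the rounds before a, read off the restriction of the data to
  past_index a; the delays are stored as reals, hence the rounding.\<close>

definition past_reward :: "nat \<Rightarrow> nat \<Rightarrow> nat \<Rightarrow> (nat \<times> nat \<times> bool \<Rightarrow> real) \<Rightarrow> real" where
  "past_reward a l i x = (if (l, i, True) \<in> past_index a then x (l, i, True) else 0)"

definition past_delay :: "nat \<Rightarrow> nat \<Rightarrow> nat \<Rightarrow> (nat \<times> nat \<times> bool \<Rightarrow> real) \<Rightarrow> nat" where
  "past_delay a l i x = (if (l, i, False) \<in> past_index a then nat \<lfloor>x (l, i, False)\<rfloor> else 0)"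

lemma measurable_data_past:
  "measurable_data (PiM (past_index a) (\<lambda>_. borel)) K pick (past_reward a) (past_delay a)"
proof
  fix l i
  show "past_reward a l i \<in> borel_measurable (PiM (past_index a) (\<lambda>_. borel))"
    unfolding past_reward_def by (cases "(l, i, True) \<in> past_index a") simp_all
  show "past_delay a l i \<in> measurable (PiM (past_index a) (\<lambda>_. borel)) (count_space UNIV)"
    unfolding past_delay_def by (cases "(l, i, False) \<in> past_index a") simp_all
qed (fact K_ge_1 pick_in)+

abbreviation past_data :: "nat \<Rightarrow> 'a \<Rightarrow> nat \<times> nat \<times> bool \<Rightarrow> real" where
  "past_data a \<omega> \<equiv> restrict (\<lambda>i. data_var i \<omega>) (past_index a)"

abbreviation past_run :: "nat \<Rightarrow> nat \<Rightarrow> (nat \<times> nat \<times> bool \<Rightarrow> real) \<Rightarrow> odaaf_state" where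
  "past_run a k x \<equiv> odaaf_run K n pick (\<lambda>l i. past_reward a l i x) (\<lambda>l i. past_delay a l i x) k"

lemma same_data_before_past_data:
  "same_data_before K a (\<lambda>l i. R l i \<omega>) (\<lambda>l i. tau l i \<omega>)
     (\<lambda>l i. past_reward a l i (past_data a \<omega>)) (\<lambda>l i. past_delay a l i (past_data a \<omega>))"
  by (simp add: same_data_before_def past_reward_def past_delay_def past_index_def data_var_def)

definition centred_sum :: "odaaf_state \<Rightarrow> (nat \<Rightarrow> nat \<Rightarrow> real) \<Rightarrow> real" where
  "centred_sum st r = (\<Sum>t\<in>samp st j. r t j - mu j)"

text \<open>The summand of e^(lam S) on the event that arm j is active and its block of the next phase
  starts in round a; summing over a recovers the whole, and each summand is a function of the data
  before round a only.\<close>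

definition block_term :: "real \<Rightarrow> nat \<Rightarrow> nat \<Rightarrow> odaaf_state \<Rightarrow> (nat \<Rightarrow> nat \<Rightarrow> real) \<Rightarrow> ennreal" where
  "block_term lam k a st r =
     (if j \<in> act st \<and> arm_block_start n (Suc k) st j = a then ennreal (exp (lam * centred_sum st r)) else 0)"

lemma block_term_erase_means [simp]: "block_term lam k a (erase_means st) r = block_term lam k a st r"
  by (simp add: block_term_def centred_sum_def arm_block_start_def block_start_def block_lengths_def
      active_list_def)

lemma block_term_measurable:
  "(\<lambda>\<omega>. block_term lam k a (run k \<omega>) (\<lambda>l i. R l i \<omega>)) \<in> borel_measurable M"
proof -
  have "(\<lambda>\<omega>. block_term lam k a (erase_means (run k \<omega>)) (\<lambda>l i. R l i \<omega>)) \<in> borel_measurable M"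
    by (rule measurable_erased_run_dependent[where g="\<lambda>v \<omega>. block_term lam k a v (\<lambda>l i. R l i \<omega>)"])
       (unfold block_term_def centred_sum_def, measurable)
  then show ?thesis by simp
qed

lemma block_term_past_measurable:
  "(\<lambda>x. block_term lam k a (past_run a k x) (\<lambda>l i. past_reward a l i x))
     \<in> borel_measurable (PiM (past_index a) (\<lambda>_. borel))"
proof -
  interpret past: measurable_data "PiM (past_index a) (\<lambda>_. borel)" K n pick "past_reward a" "past_delay a"
    by (rule measurable_data_past)
  have "(\<lambda>x. block_term lam k a (erase_means (past_run a k x)) (\<lambda>l i. past_reward a l i x))
          \<in> borel_measurable (PiM (past_index a) (\<lambda>_. borel))"
    by (rule past.measurable_erased_run_dependent[where g="\<lambda>v x. block_term lam k a v (\<lambda>l i. past_reward a l i x)"])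
       (unfold block_term_def centred_sum_def, measurable)
  then show ?thesis by simp
qed

lemma block_term_past_data:
  assumes "\<omega> \<in> space M"
  shows "block_term lam k a (past_run a k (past_data a \<omega>)) (\<lambda>l i. past_reward a l i (past_data a \<omega>))
       = block_term lam k a (run k \<omega>) (\<lambda>l i. R l i \<omega>)"
    (is "block_term lam k a ?st' ?r' = block_term lam k a ?st ?r")
proof -
  have same: "same_data_before K a (\<lambda>l i. R l i \<omega>) (\<lambda>l i. tau l i \<omega>)
      (\<lambda>l i. past_reward a l i (past_data a \<omega>)) (\<lambda>l i. past_delay a l i (past_data a \<omega>))"
    by (rule same_data_before_past_data)
  have start_le: "start st \<le> a" if "wf_state K st" "j \<in> act st" "arm_block_start n (Suc k) st j = a" for st
    using new_samples_split(3)[OF that(1,2), where n=n and m="Suc k"] that(3) by simp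
  have wf: "wf_state K ?st" by (rule wf_state_run[OF K_ge_1 pick_in])
  have wf': "wf_state K ?st'" by (rule wf_state_run[OF K_ge_1 pick_in])
  show ?thesis
  proof (cases "j \<in> act ?st \<and> arm_block_start n (Suc k) ?st j = a")
    case True
    then have "start ?st \<le> a" using start_le[OF wf] by blast
    then have "?st' = ?st"
      using odaaf_run_cong_data[where n=n and pick=pick, OF K_ge_1 pick_in] same_data_before_mono[OF same] by blast
    moreover have "centred_sum ?st ?r' = centred_sum ?st ?r"
      using wf \<open>start ?st \<le> a\<close> j_arm
      by (force simp: centred_sum_def wf_state_def past_reward_def past_index_def data_var_def
          intro: sum.cong)
    ultimately show ?thesis by (simp add: block_term_def)
  next
    case False
    have "\<not> (j \<in> act ?st' \<and> arm_block_start n (Suc k) ?st' j = a)"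
    proof
      assume *: "j \<in> act ?st' \<and> arm_block_start n (Suc k) ?st' j = a"
      then have "start ?st' \<le> a" using start_le[OF wf'] by blast
      then have "?st = ?st'"
        using odaaf_run_cong_data[where n=n and pick=pick, OF K_ge_1 pick_in] same_data_before_mono[OF same_data_before_sym[OF same]]
        by blast
      then show False using * False by simp
    qed
    then show ?thesis using False by (simp add: block_term_def)
  qed
qed

lemma centred_sum_run_Suc:
  assumes "j \<in> act (odaaf_run K n pick r dl k)"
  defines "a \<equiv> arm_block_start n (Suc k) (odaaf_run K n pick r dl k) j"
  shows "centred_sum (odaaf_run K n pick r dl (Suc k)) r'
           = centred_sum (odaaf_run K n pick r dl k) r' + (\<Sum>l\<in>{a..<a + (n (Suc k) - n k)}. r' l j - mu j)"
proof -
  let ?st = "odaaf_run K n pick r dl k"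
  have wf: "wf_state K ?st" by (rule wf_state_run[OF K_ge_1 pick_in])
  have card: "card (samp ?st j) = n k"
    by (rule card_samp_run[OF K_ge_1 pick_in n_0 mono_n assms(1)])
  show ?thesis
    using new_samples_split[OF wf assms(1), where n=n and m="Suc k"] wf card
    by (simp add: centred_sum_def a_def odaaf_phase_eq sum.union_disjoint wf_state_def)
qed

text \<open>Note that act (run k \<omega>) is the active set of phase k + 1.\<close>

definition active_exp :: "real \<Rightarrow> nat \<Rightarrow> nat \<Rightarrow> 'a \<Rightarrow> ennreal" where
  "active_exp lam k k' \<omega> =
     (if j \<in> act (run k \<omega>) then ennreal (exp (lam * centred_sum (run k' \<omega>) (\<lambda>l i. R l i \<omega>))) else 0)"

lemma active_exp_eq_suminf: "active_exp lam k k \<omega> = (\<Sum>a. block_term lam k a (run k \<omega>) (\<lambda>l i. R l i \<omega>))"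
proof (cases "j \<in> act (run k \<omega>)")
  case True
  let ?a = "arm_block_start n (Suc k) (run k \<omega>) j"
  let ?e = "ennreal (exp (lam * centred_sum (run k \<omega>) (\<lambda>l i. R l i \<omega>)))"
  have "(\<lambda>a. block_term lam k a (run k \<omega>) (\<lambda>l i. R l i \<omega>)) = (\<lambda>a. if a = ?a then ?e else 0)"
    using True by (auto simp: block_term_def)
  then show ?thesis
    using True sums_unique[OF sums_single[of ?a "\<lambda>_. ?e"]] by (simp add: active_exp_def)
qed (simp add: active_exp_def block_term_def)

lemma active_exp_Suc_eq_suminf:
  "active_exp lam k (Suc k) \<omega>
     = (\<Sum>a. block_term lam k a (run k \<omega>) (\<lambda>l i. R l i \<omega>) * block_mgf_var lam a (n (Suc k) - n k) \<omega>)"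
proof (cases "j \<in> act (run k \<omega>)")
  case True
  let ?a = "arm_block_start n (Suc k) (run k \<omega>) j"
  let ?e = "ennreal (exp (lam * centred_sum (run k \<omega>) (\<lambda>l i. R l i \<omega>))) * block_mgf_var lam ?a (n (Suc k) - n k) \<omega>"
  have "active_exp lam k (Suc k) \<omega> = ?e"
    using True centred_sum_run_Suc[OF True, of "\<lambda>l i. R l i \<omega>"]
    by (simp add: active_exp_def block_mgf_var_def ennreal_mult[symmetric] distrib_left exp_add)
  moreover have "(\<lambda>a. block_term lam k a (run k \<omega>) (\<lambda>l i. R l i \<omega>) * block_mgf_var lam a (n (Suc k) - n k) \<omega>)
      = (\<lambda>a. if a = ?a then ?e else 0)"
    using True by (auto simp: block_term_def)
  ultimately show ?thesis
    using sums_unique[OF sums_single[of ?a "\<lambda>_. ?e"]] by simp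
qed (simp add: active_exp_def block_term_def)

lemma block_term_0: "block_term lam k 0 (odaaf_run K n pick r dl k) r' = 0"
proof -
  have "start (odaaf_run K n pick r dl k) \<le> arm_block_start n (Suc k) (odaaf_run K n pick r dl k) j"
       "1 \<le> start (odaaf_run K n pick r dl k)"
    if "j \<in> act (odaaf_run K n pick r dl k)"
    using new_samples_split(3)[OF wf_state_run[OF K_ge_1 pick_in] that] wf_state_run[OF K_ge_1 pick_in]
    by (auto simp: wf_state_def)
  then show ?thesis by (fastforce simp: block_term_def)
qed

lemma block_term_mgf_le:
  "(\<integral>\<^sup>+\<omega>. block_term lam k a (run k \<omega>) (\<lambda>l i. R l i \<omega>) * block_mgf_var lam a L \<omega> \<partial>M)
     \<le> (\<integral>\<^sup>+\<omega>. block_term lam k a (run k \<omega>) (\<lambda>l i. R l i \<omega>) \<partial>M) * ennreal (exp (lam\<^sup>2 / 8)) ^ L"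
proof (cases "a = 0")
  case False
  then have a: "1 \<le> a" by simp
  define f where "f x = block_term lam k a (past_run a k x) (\<lambda>l i. past_reward a l i x)" for x
  define g where "g y = (\<Prod>i\<in>block_index a L. ennreal (exp (lam * (y i - mu j))))"
    for y :: "nat \<times> nat \<times> bool \<Rightarrow> real"
  have f_eq: "f (past_data a \<omega>) = block_term lam k a (run k \<omega>) (\<lambda>l i. R l i \<omega>)" if "\<omega> \<in> space M" for \<omega>
    unfolding f_def using that by (rule block_term_past_data)
  have g_eq: "g (restrict (\<lambda>i. data_var i \<omega>) (block_index a L)) = block_mgf_var lam a L \<omega>" for \<omega>
    unfolding g_def block_mgf_var_eq_prod by (intro prod.cong) auto
  have f_meas: "f \<in> borel_measurable (PiM (past_index a) (\<lambda>_. borel))"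
    unfolding f_def by (rule block_term_past_measurable)
  have g_meas: "g \<in> borel_measurable (PiM (block_index a L) (\<lambda>_. borel))"
    unfolding g_def by measurable
  have "(\<integral>\<^sup>+\<omega>. block_term lam k a (run k \<omega>) (\<lambda>l i. R l i \<omega>) * block_mgf_var lam a L \<omega> \<partial>M)
      = (\<integral>\<^sup>+\<omega>. f (past_data a \<omega>) * g (restrict (\<lambda>i. data_var i \<omega>) (block_index a L)) \<partial>M)"
    using f_eq g_eq by (intro nn_integral_cong) simp
  also have "\<dots> = (\<integral>\<^sup>+\<omega>. f (past_data a \<omega>) \<partial>M) * (\<integral>\<^sup>+\<omega>. g (restrict (\<lambda>i. data_var i \<omega>) (block_index a L)) \<partial>M)"
    by (rule indep_var_nn_integral_mult[OF indep_past_block[OF a] f_meas g_meas])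
  also have "\<dots> = (\<integral>\<^sup>+\<omega>. block_term lam k a (run k \<omega>) (\<lambda>l i. R l i \<omega>) \<partial>M) * (\<integral>\<^sup>+\<omega>. block_mgf_var lam a L \<omega> \<partial>M)"
    using f_eq g_eq by (intro arg_cong2[where f="(*)"] nn_integral_cong) simp_all
  also have "\<dots> \<le> (\<integral>\<^sup>+\<omega>. block_term lam k a (run k \<omega>) (\<lambda>l i. R l i \<omega>) \<partial>M) * ennreal (exp (lam\<^sup>2 / 8)) ^ L"
    using block_mgf_le[OF a] by (rule mult_left_mono) simp
  finally show ?thesis .
qed (simp add: block_term_0)

lemma active_exp_mgf_step:
  "(\<integral>\<^sup>+\<omega>. active_exp lam k (Suc k) \<omega> \<partial>M)
     \<le> (\<integral>\<^sup>+\<omega>. active_exp lam k k \<omega> \<partial>M) * ennreal (exp (lam\<^sup>2 / 8)) ^ (n (Suc k) - n k)"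
proof -
  let ?L = "n (Suc k) - n k" and ?c = "ennreal (exp (lam\<^sup>2 / 8)) ^ (n (Suc k) - n k)"
  let ?t = "\<lambda>a \<omega>. block_term lam k a (run k \<omega>) (\<lambda>l i. R l i \<omega>)"
  have "(\<integral>\<^sup>+\<omega>. active_exp lam k (Suc k) \<omega> \<partial>M) = (\<Sum>a. \<integral>\<^sup>+\<omega>. ?t a \<omega> * block_mgf_var lam a ?L \<omega> \<partial>M)"
    unfolding active_exp_Suc_eq_suminf
    by (intro nn_integral_suminf borel_measurable_times_ennreal block_term_measurable)
       (simp add: block_mgf_var_def)
  also have "\<dots> \<le> (\<Sum>a. (\<integral>\<^sup>+\<omega>. ?t a \<omega> \<partial>M) * ?c)"
    by (intro suminf_le block_term_mgf_le summableI)
  also have "\<dots> = (\<integral>\<^sup>+\<omega>. active_exp lam k k \<omega> \<partial>M) * ?c"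
    unfolding active_exp_eq_suminf by (simp add: nn_integral_suminf block_term_measurable)
  finally show ?thesis .
qed

lemma active_exp_mgf_le: "(\<integral>\<^sup>+\<omega>. active_exp lam k (Suc k) \<omega> \<partial>M) \<le> ennreal (exp (lam\<^sup>2 / 8)) ^ n (Suc k)"
proof (induction k)
  case 0
  have "(\<integral>\<^sup>+\<omega>. active_exp lam 0 0 \<omega> \<partial>M) \<le> (\<integral>\<^sup>+\<omega>. 1 \<partial>M)"
    by (intro nn_integral_mono) (simp add: active_exp_def centred_sum_def)
  then have "(\<integral>\<^sup>+\<omega>. active_exp lam 0 0 \<omega> \<partial>M) \<le> 1"
    by (simp add: emeasure_space_1)
  then show ?case
    using active_exp_mgf_step[of lam 0] n_0 mult_right_mono[of _ 1 "ennreal (exp (lam\<^sup>2 / 8)) ^ n (Suc 0)"]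
    by (simp add: order_trans)
next
  case (Suc k)
  let ?c = "ennreal (exp (lam\<^sup>2 / 8))"
  have "(\<integral>\<^sup>+\<omega>. active_exp lam (Suc k) (Suc k) \<omega> \<partial>M) \<le> (\<integral>\<^sup>+\<omega>. active_exp lam k (Suc k) \<omega> \<partial>M)"
  proof (rule nn_integral_mono)
    fix \<omega>
    have "act (run (Suc k) \<omega>) \<subseteq> act (run k \<omega>)" by (rule act_run_Suc_subset)
    then show "active_exp lam (Suc k) (Suc k) \<omega> \<le> active_exp lam k (Suc k) \<omega>"
      unfolding active_exp_def by auto
  qed
  then have "(\<integral>\<^sup>+\<omega>. active_exp lam (Suc k) (Suc (Suc k)) \<omega> \<partial>M)
      \<le> ?c ^ n (Suc k) * ?c ^ (n (Suc (Suc k)) - n (Suc k))"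
    using active_exp_mgf_step[of lam "Suc k"] Suc.IH
    by (meson order.trans mult_right_mono zero_le)
  also have "\<dots> = ?c ^ n (Suc (Suc k))"
    using monoD[OF mono_n, of "Suc k" "Suc (Suc k)"] by (simp add: power_add[symmetric])
  finally show ?case .
qed

lemma centred_sum_tail:
  fixes k :: nat and eps :: real
  assumes s: "s\<^sup>2 = 1" and eps: "0 \<le> eps"
  defines "E \<equiv> {\<omega> \<in> space M. j \<in> act (run k \<omega>) \<and> real (n (Suc k)) * eps < s * centred_sum (run (Suc k) \<omega>) (\<lambda>l i. R l i \<omega>)}"
  shows "E \<in> sets M" and "emeasure M E \<le> ennreal (exp (- 2 * real (n (Suc k)) * eps\<^sup>2))"
proof -
  have samp_Suc: "samp (run (Suc k) \<omega>) = new_samples n (Suc k) (erase_means (run k \<omega>))" for \<omega>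
    unfolding run_Suc_erase_means by (simp add: odaaf_phase_eq)
  define P where "P v \<omega> \<longleftrightarrow> j \<in> act v \<and> real (n (Suc k)) * eps < s * (\<Sum>t\<in>new_samples n (Suc k) v j. R t j \<omega> - mu j)"
    for v \<omega>
  have "E = {\<omega> \<in> space M. P (erase_means (run k \<omega>)) \<omega>}"
    unfolding E_def P_def centred_sum_def samp_Suc by simp
  moreover have "{\<omega> \<in> space M. P v \<omega>} \<in> sets M" for v
    unfolding P_def by measurable
  ultimately show E: "E \<in> sets M"
    using sets_erased_run_dependent[of P] by simp
  define lam where "lam = 4 * s * eps"
  define c where "c = ennreal (exp (- 4 * real (n (Suc k)) * eps\<^sup>2))"
  have "(\<lambda>\<omega>. if j \<in> act (erase_means (run k \<omega>))
      then ennreal (exp (lam * (\<Sum>t\<in>new_samples n (Suc k) (erase_means (run k \<omega>)) j. R t j \<omega> - mu j)))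
      else 0) \<in> borel_measurable M"
    by (rule measurable_erased_run_dependent[where g="\<lambda>v \<omega>. if j \<in> act v
      then ennreal (exp (lam * (\<Sum>t\<in>new_samples n (Suc k) v j. R t j \<omega> - mu j))) else 0"])
       measurable
  then have "active_exp lam k (Suc k) \<in> borel_measurable M"
    unfolding active_exp_def centred_sum_def samp_Suc by simp
  have "indicator E \<omega> \<le> active_exp lam k (Suc k) \<omega> * c" for \<omega>
  proof (cases "\<omega> \<in> E")
    case True
    then have "4 * eps * (real (n (Suc k)) * eps) \<le> 4 * eps * (s * centred_sum (run (Suc k) \<omega>) (\<lambda>l i. R l i \<omega>))"
      using eps by (intro mult_left_mono) (auto simp: E_def)
    then have "1 \<le> exp (lam * centred_sum (run (Suc k) \<omega>) (\<lambda>l i. R l i \<omega>) - 4 * real (n (Suc k)) * eps\<^sup>2)"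
      by (simp add: lam_def power2_eq_square algebra_simps)
    then show ?thesis
      using True by (simp add: E_def active_exp_def c_def ennreal_mult[symmetric] exp_add[symmetric])
  qed simp
  then have "emeasure M E \<le> (\<integral>\<^sup>+\<omega>. active_exp lam k (Suc k) \<omega> * c \<partial>M)"
    using E by (simp add: nn_integral_mono flip: nn_integral_indicator)
  also have "\<dots> = (\<integral>\<^sup>+\<omega>. active_exp lam k (Suc k) \<omega> \<partial>M) * c"
    using \<open>active_exp lam k (Suc k) \<in> borel_measurable M\<close> by (rule nn_integral_multc)
  also have "\<dots> \<le> ennreal (exp (lam\<^sup>2 / 8)) ^ n (Suc k) * c"
    by (intro mult_right_mono active_exp_mgf_le) simp
  also have "\<dots> = ennreal (exp (- 2 * real (n (Suc k)) * eps\<^sup>2))"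
  proof -
    have "lam\<^sup>2 = 16 * eps\<^sup>2" using s by (simp add: lam_def power_mult_distrib)
    then show ?thesis
      by (simp add: c_def ennreal_power exp_of_nat_mult[symmetric] ennreal_mult[symmetric]
          exp_add[symmetric] algebra_simps)
  qed
  finally show "emeasure M E \<le> ennreal (exp (- 2 * real (n (Suc k)) * eps\<^sup>2))" .
qed

lemma deviation_event_sets:
  assumes "1 \<le> m"
  shows "{\<omega> \<in> space M. j \<in> act (run (m - 1) \<omega>) \<and> \<bar>xbar (run m \<omega>) j - mu j\<bar> > w} \<in> sets M"
proof -
  obtain k where m: "m = Suc k" using assms by (cases m) auto
  define P where "P v \<omega> \<longleftrightarrow> j \<in> act v \<and>
    w < \<bar>phase_means n (Suc k) (\<lambda>l i. R l i \<omega>) (\<lambda>l i. tau l i \<omega>) v j - mu j\<bar>" for v \<omega>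
  have "{\<omega> \<in> space M. P v \<omega>} \<in> sets M" for v
    unfolding P_def by measurable
  then have "{\<omega> \<in> space M. P (erase_means (run k \<omega>)) \<omega>} \<in> sets M"
    by (rule sets_erased_run_dependent)
  then show ?thesis
    unfolding m run_Suc_erase_means by (simp add: P_def odaaf_phase_eq)
qed

lemma deviation_prob_le:
  assumes "1 \<le> m" "0 < c"
  defines "w \<equiv> sqrt (ln c / (2 * real (n m))) + real m * real d / real (n m)"
  shows "measure M {\<omega> \<in> space M. j \<in> act (run (m - 1) \<omega>) \<and> \<bar>xbar (run m \<omega>) j - mu j\<bar> > w} \<le> 2 / c"
    (is "measure M ?E \<le> _")
proof (cases "c \<le> 2")
  case True
  then show ?thesis using prob_le_1[of ?E] assms(2) by (smt (verit) le_divide_eq_1_pos)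
next
  case False
  obtain k where m: "m = Suc k" using assms(1) by (cases m) auto
  define eps where "eps = sqrt (ln c / (2 * real (n m)))"
  have eps: "0 \<le> eps" "exp (- 2 * real (n (Suc k)) * eps\<^sup>2) = 1 / c"
    using False n_pos[of k] by (simp_all add: eps_def m exp_minus exp_ln field_simps)
  let ?E1 = "{\<omega> \<in> space M. j \<in> act (run k \<omega>) \<and> real (n (Suc k)) * eps < 1 * centred_sum (run (Suc k) \<omega>) (\<lambda>l i. R l i \<omega>)}"
  let ?E2 = "{\<omega> \<in> space M. j \<in> act (run k \<omega>) \<and> real (n (Suc k)) * eps < -1 * centred_sum (run (Suc k) \<omega>) (\<lambda>l i. R l i \<omega>)}"
  have "AE \<omega> in M. \<omega> \<in> ?E \<longrightarrow> \<omega> \<in> ?E1 \<union> ?E2"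
    using bounded_data_AE
  proof eventually_elim
    case (elim \<omega>)
    show ?case
    proof
      assume E: "\<omega> \<in> ?E"
      then have ja: "j \<in> act (run k \<omega>)" and gt: "w < \<bar>xbar (run (Suc k) \<omega>) j - mu j\<bar>"
        by (simp_all add: m)
      have "\<bar>xbar (run (Suc k) \<omega>) j - mu j\<bar>
          \<le> \<bar>centred_sum (run (Suc k) \<omega>) (\<lambda>l i. R l i \<omega>)\<bar> / n (Suc k) + Suc k * d / n (Suc k)"
        using xbar_run_deviation_le[where pick=pick and n=n and c="mu j",
            OF K_ge_1 pick_in elim n_0 mono_n n_pos ja]
        by (simp add: centred_sum_def)
      moreover have "w = eps + Suc k * d / n (Suc k)"
        unfolding w_def eps_def m by (simp only: of_nat_mult)
      ultimately have "eps < \<bar>centred_sum (run (Suc k) \<omega>) (\<lambda>l i. R l i \<omega>)\<bar> / n (Suc k)"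
        using gt by linarith
      then have "real (n (Suc k)) * eps < \<bar>centred_sum (run (Suc k) \<omega>) (\<lambda>l i. R l i \<omega>)\<bar>"
        using n_pos[of k] by (simp add: field_simps)
      then show "\<omega> \<in> ?E1 \<union> ?E2" using E by (auto simp: m abs_if split: if_splits)
    qed
  qed
  then have "ennreal (measure M ?E) \<le> emeasure M (?E1 \<union> ?E2)"
    unfolding emeasure_eq_measure[symmetric]
    using centred_sum_tail(1)[of 1] centred_sum_tail(1)[of "-1"] eps(1)
    by (intro emeasure_mono_AE) auto
  also have "\<dots> \<le> emeasure M ?E1 + emeasure M ?E2"
    using centred_sum_tail(1)[of 1] centred_sum_tail(1)[of "-1"] eps(1)
    by (intro emeasure_subadditive) auto
  also have "\<dots> \<le> ennreal (1 / c) + ennreal (1 / c)"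
    using centred_sum_tail(2)[of 1 eps k] centred_sum_tail(2)[of "-1" eps k] eps
    by (intro add_mono) auto
  also have "\<dots> = ennreal (2 / c)"
    using \<open>0 < c\<close> by (simp add: ennreal_plus[symmetric])
  finally show ?thesis
    by (rule ennreal_le_iff[THEN iffD1, rotated]) (use \<open>0 < c\<close> in simp)
qed

end

theorem mainTheorem15:
  fixes M :: "'a measure" and K T d :: nat and n :: "nat \<Rightarrow> nat"
    and pick :: "nat \<Rightarrow> nat set \<Rightarrow> nat"
    and R :: "nat \<Rightarrow> nat \<Rightarrow> 'a \<Rightarrow> real" and tau :: "nat \<Rightarrow> nat \<Rightarrow> 'a \<Rightarrow> nat"
    and zeta :: "nat \<Rightarrow> real measure" and mu :: "nat \<Rightarrow> real" and D :: "nat measure"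
    and m j :: nat
  assumes "prob_space M"
    and "K \<ge> 2" and "T \<ge> 1"
    and "n 0 = 0" and "strict_mono n"
    and "\<And>m A. A \<noteq> {} \<Longrightarrow> pick m A \<in> A"
    and "\<And>l j. R l j \<in> borel_measurable M"
    and "\<And>l j. tau l j \<in> measurable M (count_space UNIV)"
    and "prob_space.indep_vars M (\<lambda>_. borel)
           (\<lambda>(l, j, b) \<omega>. if b then R l j \<omega> else real (tau l j \<omega>))
           ({1..} \<times> {1..K} \<times> UNIV)"
    and "\<And>l j. l \<ge> 1 \<Longrightarrow> j \<in> {1..K} \<Longrightarrow> distr M borel (R l j) = zeta j"
    and "\<And>j. j \<in> {1..K} \<Longrightarrow> (AE x in zeta j. 0 \<le> x \<and> x \<le> 1)"
    and "\<And>j. j \<in> {1..K} \<Longrightarrow> mu j = (\<integral>x. x \<partial>zeta j)"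
    and "\<And>l j. l \<ge> 1 \<Longrightarrow> j \<in> {1..K} \<Longrightarrow> distr M (count_space UNIV) (tau l j) = D"
    and "AE x in D. x \<le> d"
    and "m \<ge> 1" and "j \<in> {1..K}"
  shows "(let w = sqrt (ln (real T * (tol m)\<^sup>2) / (2 * real (n m))) + real m * real d / real (n m);
              E = {\<omega> \<in> space M.
                    j \<in> act (odaaf_run K n pick (\<lambda>l i. R l i \<omega>) (\<lambda>l i. tau l i \<omega>) (m - 1))
                  \<and> \<bar>xbar (odaaf_run K n pick (\<lambda>l i. R l i \<omega>) (\<lambda>l i. tau l i \<omega>) m) j - mu j\<bar> > w}
          in E \<in> sets M \<and> measure M E \<le> 2 / (real T * (tol m)\<^sup>2))"
proof -
  have "K \<ge> 1" using \<open>K \<ge> 2\<close> by simp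
  interpret odaaf_bandit M K n pick R tau zeta mu D d j
    by (rule odaaf_bandit.intro[OF assms(1) odaaf_bandit_axioms.intro[OF \<open>K \<ge> 1\<close> assms(4-14,16)]])
  have "0 < real T * (tol m)\<^sup>2" using \<open>T \<ge> 1\<close> by (simp add: tol_def)
  with \<open>m \<ge> 1\<close> show ?thesis
    unfolding Let_def by (intro conjI deviation_event_sets deviation_prob_le)
qed

end
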